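(* For all positive integers $k$, $\mathrm{opt}_{\mathrm{bs}}(k,2)\le \lceil k\ln k\rceil+2k$.
   Context: Let $F$ be a family of functions from a set $X$ to a set $Y$. Online learning of $F$ is a game between a learner and an adversary: the adversary secretly fixes some $f\in F$ and presents inputs $x_1,x_2,\dots\in X$ one at a time, chosen adaptively; after each input $x_t$ the learner guesses a value for $f(x_t)$. A mistake is an incorrect guess. In the standard model, after each guess the adversary reveals the true value $f(x_t)$; in the bandit model, the adversary only says YES (guess correct) or NO (guess incorrect). $\mathrm{opt}_{\mathrm{std}}(F)$ (resp. $\mathrm{opt}_{\mathrm{bs}}(F)$) is the maximum number of mistakes the learner makes in the standard (resp. bandit) model when both learner and adversary play optimally (the learner minimizing, the adversary maximizing, the adversary's answers required to be consistent with some $f\in F$). For positive integers $k,M$, $\mathrm{opt}_{\mathrm{bs}}(k,M)$ denotes the maximum of $\mathrm{opt}_{\mathrm{bs}}(F)$ over all families $F$ of functions (with arbitrary domain) with codomain $\{0,1,\dots,k-1\}$ and $\mathrm{opt}_{\mathrm{std}}(F)=M$. *)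

theory Defs
  imports Complex_Main "HOL-Library.Extended_Nat"
begin

text \<open>A state of the game is the current version space V
(the functions of the family consistent with the answers so far) together with
the remaining mistake budget m.
The learner can guarantee at most m further mistakes from version space V iff
(V, m) lies in the greatest set of states closed under the game rules
(safety game; coinductive winning region).\<close>

text \<open>Standard model: after the guess y the adversary reveals the true value v
(which must be consistent with some function in V); v \<noteq> y is a mistake.\<close>
coinductive std_win :: "'b set \<Rightarrow> ('a \<Rightarrow> 'b) set \<Rightarrow> nat \<Rightarrow> bool"
  for Y :: "'b set" where
  "(\<And>x. \<exists>y\<in>Y. \<forall>v. {f\<in>V. f x = v} \<noteq> {} \<longrightarrow>
       (if v = y then std_win Y {f\<in>V. f x = v} m
        else 0 < m \<and> std_win Y {f\<in>V. f x = v} (m - 1)))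
   \<Longrightarrow> std_win Y V m"

text \<open>Bandit model: after the guess y the adversary only answers YES (y is
correct, consistent with some function in V) or NO (a mistake, consistent with
some function in V not taking value y at x).\<close>
coinductive bs_win :: "'b set \<Rightarrow> ('a \<Rightarrow> 'b) set \<Rightarrow> nat \<Rightarrow> bool"
  for Y :: "'b set" where
  "(\<And>x. \<exists>y\<in>Y.
       ({f\<in>V. f x = y} \<noteq> {} \<longrightarrow> bs_win Y {f\<in>V. f x = y} m) \<and>
       ({f\<in>V. f x \<noteq> y} \<noteq> {} \<longrightarrow> 0 < m \<and> bs_win Y {f\<in>V. f x \<noteq> y} (m - 1)))
   \<Longrightarrow> bs_win Y V m"

text \<open>Optimal mistake bounds (infinity if no finite bound can be guaranteed).\<close>
definition opt_std :: "'b set \<Rightarrow> ('a \<Rightarrow> 'b) set \<Rightarrow> enat" where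
  "opt_std Y F = (INF m\<in>{m. std_win Y F m}. enat m)"

definition opt_bs :: "'b set \<Rightarrow> ('a \<Rightarrow> 'b) set \<Rightarrow> enat" where
  "opt_bs Y F = (INF m\<in>{m. bs_win Y F m}. enat m)"

end

theory Submission
  imports Defs
begin

text \<open>The bandit learner first copies an optimal standard learner. Its first mistake
  leaves at most k - 1 version spaces of standard mistake bound 1, one for each remaining
  value. From then on it keeps the version space covered by such classes, of potential k
  each, and by single functions, of potential 1 each. At every point x each class has a
  pivot value (the guess of its standard learner): functions of the class taking any other
  value are determined by it. Guessing the value of largest potential, a YES answer never
  increases the potential, and a NO answer either eliminates a class or multiplies the
  potential by at most (k - 1)/k. As (1 - 1/k)^J \<le> 1/k for J \<ge> k ln k, after the first
  mistake there can be at most k - 1 class eliminations, J shrinking mistakes and k - 1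
  further mistakes, each lowering the potential below k by at least one.\<close>

lemma card_filter_split: "finite A \<Longrightarrow> card A = card {a\<in>A. P a} + card {a\<in>A. \<not> P a}"
  using card_Int_Diff[of A "{a. P a}"] by (simp add: Int_def set_diff_eq)

lemma card_Int_lessThan_le: "card (Z \<inter> {..<k}) \<le> k"
  using card_mono[of "{..<k}" "Z \<inter> {..<k}"] by simp

lemma card_eq_sum_card_fibres:
  assumes "finite S" and "finite R" and "g ` S \<subseteq> R"
  shows "card S = (\<Sum>v\<in>R. card {s\<in>S. g s = v})"
  using sum_fun_comp[OF assms, of "\<lambda>_. 1 :: nat"] by simp

lemma ex_sum_le_card_mult:
  fixes w :: "'a \<Rightarrow> 'b::linordered_semidom"
  assumes "finite R" and "R \<noteq> {}"
  shows "\<exists>y\<in>R. sum w R \<le> of_nat (card R) * w y"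
proof -
  have "Max (w ` R) \<in> w ` R"
    using assms by simp
  then obtain y where "y \<in> R" and "w y = Max (w ` R)"
    by (metis imageE)
  then have "w v \<le> w y" if "v \<in> R" for v
    using assms(1) that by simp
  then show ?thesis
    using \<open>y \<in> R\<close> by (intro bexI[of _ y] sum_bounded_above)
qed

lemma std_win_unfold:
  assumes "std_win Y V m"
  shows "\<exists>y\<in>Y. \<forall>v. {f\<in>V. f x = v} \<noteq> {} \<longrightarrow>
      (if v = y then std_win Y {f\<in>V. f x = v} m
       else 0 < m \<and> std_win Y {f\<in>V. f x = v} (m - 1))"
  using assms by (cases rule: std_win.cases) blast

lemma std_win_antimono:
  assumes "std_win Y V m" and "W \<subseteq> V"
  shows "std_win Y W m"
  using assms
proof (coinduction arbitrary: V W m)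
  case (std_win V W m)
  then have fibre: "{f\<in>W. f x = v} \<subseteq> {f\<in>V. f x = v}" for x v
    by blast
  have "\<exists>y\<in>Y. \<forall>v. {f\<in>W. f x = v} \<noteq> {} \<longrightarrow>
      (if v = y then std_win Y {f\<in>V. f x = v} m
       else 0 < m \<and> std_win Y {f\<in>V. f x = v} (m - 1))" for x
    using std_win_unfold[OF std_win(1), of x] fibre[of x] by blast
  then show ?case
    using fibre by (metis (no_types))
qed

lemma std_win_empty: "Y \<noteq> {} \<Longrightarrow> std_win Y {} m"
  by (rule std_win.intros) auto

lemma std_win_zero_eq:
  assumes "std_win Y W 0" and "f \<in> W" and "g \<in> W"
  shows "f = g"
proof
  fix x
  obtain y where y: "\<forall>v. {h\<in>W. h x = v} \<noteq> {} \<longrightarrow>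
      (if v = y then std_win Y {h\<in>W. h x = v} 0
       else 0 < (0::nat) \<and> std_win Y {h\<in>W. h x = v} (0 - 1))"
    using std_win_unfold[OF assms(1)] by blast
  have "h x = y" if "h \<in> W" for h
    using y[rule_format, of "h x"] that by (cases "h x = y") auto
  then show "f x = g x"
    using assms(2,3) by metis
qed

lemma std_win_of_opt_std_eq:
  assumes "opt_std Y F = enat m"
  shows "std_win Y F m"
proof -
  have "enat ` {n. std_win Y F n} \<noteq> {}"
  proof
    assume empty: "enat ` {n. std_win Y F n} = {}"
    have "opt_std Y F = \<infinity>"
      unfolding opt_std_def empty by (simp add: top_enat_def)
    then show False
      using assms by simp
  qed
  then have "opt_std Y F \<in> enat ` {n. std_win Y F n}"
    unfolding opt_std_def Inf_enat_def by (auto intro: LeastI)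
  then show ?thesis
    using assms by auto
qed

definition pivot :: "('a \<Rightarrow> 'b) set \<Rightarrow> 'a \<Rightarrow> 'b \<Rightarrow> bool" where
  "pivot A x h \<longleftrightarrow> (\<forall>f\<in>A. \<forall>g\<in>A. f x = g x \<longrightarrow> f x \<noteq> h \<longrightarrow> f = g)"

lemma std_win_one_pivot:
  assumes "std_win Y A 1"
  shows "\<exists>h\<in>Y. pivot A x h"
proof -
  obtain h where "h \<in> Y" and h: "\<forall>v. {f\<in>A. f x = v} \<noteq> {} \<longrightarrow>
      (if v = h then std_win Y {f\<in>A. f x = v} 1
       else 0 < (1::nat) \<and> std_win Y {f\<in>A. f x = v} (1 - 1))"
    using std_win_unfold[OF assms] by blast
  have "f = g" if "f \<in> A" "g \<in> A" "f x = g x" "f x \<noteq> h" for f g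
  proof (rule std_win_zero_eq)
    show "std_win Y {u\<in>A. u x = f x} 0"
      using h[rule_format, of "f x"] that by auto
  qed (use that in auto)
  then show ?thesis
    using \<open>h \<in> Y\<close> unfolding pivot_def by blast
qed

lemma pivot_off_fibres_card:
  assumes "pivot A x h" and "h \<notin> Z" and "finite R" and "\<forall>f\<in>A. f x \<in> R"
  shows "finite {f\<in>A. f x \<in> Z}" and "card {f\<in>A. f x \<in> Z} \<le> card (Z \<inter> R)"
proof -
  let ?S = "{f\<in>A. f x \<in> Z}"
  have inj: "inj_on (\<lambda>f. f x) ?S"
    using assms(1,2) unfolding pivot_def inj_on_def by blast
  have img: "(\<lambda>f. f x) ` ?S \<subseteq> Z \<inter> R"
    using assms(4) by auto
  then show "finite ?S"
    using inj finite_imageD finite_subset assms(3) by blast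
  show "card ?S \<le> card (Z \<inter> R)"
    using card_inj_on_le[OF inj img] assms(3) by simp
qed

text \<open>m mistakes suffice for n classes of total potential P: one is reserved for
  eliminating each class, j of them shrink the potential by the factor (k - 1)/k, and the
  r remaining ones lower it by one each.\<close>
definition mistake_budget :: "nat \<Rightarrow> nat \<Rightarrow> nat \<Rightarrow> nat \<Rightarrow> bool" where
  "mistake_budget k n P m \<longleftrightarrow> (\<exists>j r. n + j + r \<le> m \<and> P * (k - 1) ^ j \<le> (r + 1) * k ^ j)"

lemma mistake_budget_mono:
  assumes "mistake_budget k n P m" and "n' \<le> n" and "P' \<le> P"
  shows "mistake_budget k n' P' m"
proof -
  obtain j r where "n + j + r \<le> m" and "P * (k - 1) ^ j \<le> (r + 1) * k ^ j"
    using assms(1) unfolding mistake_budget_def by blast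
  moreover have "P' * (k - 1) ^ j \<le> P * (k - 1) ^ j"
    using assms(3) by (rule mult_le_mono1)
  ultimately have "n' + j + r \<le> m" and "P' * (k - 1) ^ j \<le> (r + 1) * k ^ j"
    using assms(2) by linarith+
  then show ?thesis
    unfolding mistake_budget_def by blast
qed

lemma mistake_budget_drop_class:
  assumes "mistake_budget k n P m" and "n' < n" and "P' \<le> P"
  shows "0 < m \<and> mistake_budget k n' P' (m - 1)"
proof -
  obtain j r where "n + j + r \<le> m" and "P * (k - 1) ^ j \<le> (r + 1) * k ^ j"
    using assms(1) unfolding mistake_budget_def by blast
  moreover have "P' * (k - 1) ^ j \<le> P * (k - 1) ^ j"
    using assms(3) by (rule mult_le_mono1)
  ultimately have "0 < m" and "n' + j + r \<le> m - 1" and "P' * (k - 1) ^ j \<le> (r + 1) * k ^ j"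
    using assms(2) by linarith+
  then show ?thesis
    unfolding mistake_budget_def by blast
qed

lemma mistake_budget_shrink:
  assumes budget: "mistake_budget k n P m" and "0 < k" and "0 < P'" and "n' \<le> n"
    and shrink: "k * P' \<le> (k - 1) * P"
  shows "0 < m \<and> mistake_budget k n' P' (m - 1)"
proof -
  obtain j r where used: "n + j + r \<le> m" and pot: "P * (k - 1) ^ j \<le> (r + 1) * k ^ j"
    using budget unfolding mistake_budget_def by blast
  show ?thesis
  proof (cases j)
    case 0
    have "0 < P"
      using shrink \<open>0 < P'\<close> \<open>0 < k\<close> by (cases "P = 0") auto
    then have "(k - 1) * P < k * P"
      using \<open>0 < k\<close> by simp
    then have "k * P' < k * P"
      using shrink by linarith
    then have "P' < P"
      by simp
    then have "P' \<le> r" and "0 < r"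
      using pot \<open>0 < P'\<close> 0 by auto
    then have "0 < m" and "n' + 0 + (r - 1) \<le> m - 1"
      and "P' * (k - 1) ^ 0 \<le> (r - 1 + 1) * k ^ 0"
      using used 0 \<open>n' \<le> n\<close> by auto
    then show ?thesis
      unfolding mistake_budget_def by blast
  next
    case (Suc i)
    have "k * (P' * (k - 1) ^ i) \<le> (k - 1) * P * (k - 1) ^ i"
      using shrink by (simp add: mult_le_mono1 mult.assoc)
    also have "\<dots> = P * (k - 1) ^ j"
      using Suc by simp
    also have "\<dots> \<le> k * ((r + 1) * k ^ i)"
      using pot Suc by (simp add: algebra_simps)
    finally have "P' * (k - 1) ^ i \<le> (r + 1) * k ^ i"
      using \<open>0 < k\<close> by simp
    moreover have "n' + i + r \<le> m - 1"
      using used Suc \<open>n' \<le> n\<close> by simp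
    ultimately show ?thesis
      using used Suc unfolding mistake_budget_def by auto
  qed
qed

lemma mistake_budget_disagree:
  assumes budget: "mistake_budget k (a + b) (k * (a + b) + (c + d)) m" and "0 < k"
    and heavy: "k * (a + b) + (c + d) \<le> k * (k * a + c)"
    and "n' \<le> b" and "0 < P'" and P': "P' \<le> k * b + d + (k - 1) * a"
  shows "0 < m \<and> mistake_budget k n' P' (m - 1)"
proof (cases "a = 0")
  case False
  have "(k - 1) * a \<le> k * a" and "k * (a + b) = k * a + k * b"
    by (simp_all add: distrib_left)
  then have "P' \<le> k * (a + b) + (c + d)"
    using P' by linarith
  moreover have "n' < a + b"
    using \<open>n' \<le> b\<close> False by simp
  ultimately show ?thesis
    using budget by (intro mistake_budget_drop_class)
next
  case True
  have "k * P' \<le> k * (k * b + d)"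
    using P' True by simp
  also have "\<dots> = k * (k * (a + b) + (c + d)) - k * c"
    using True by (simp add: algebra_simps)
  also have "\<dots> \<le> (k - 1) * (k * (a + b) + (c + d))"
    using heavy True by (simp add: diff_mult_distrib)
  moreover have "n' \<le> a + b"
    using \<open>n' \<le> b\<close> by simp
  ultimately show ?thesis
    using mistake_budget_shrink[OF budget \<open>0 < k\<close> \<open>0 < P'\<close>] by simp
qed

definition funs_below :: "nat \<Rightarrow> ('a \<Rightarrow> nat) set" where
  "funs_below k = {f. \<forall>x. f x < k}"

definition std1_cover ::
    "nat \<Rightarrow> ('a \<Rightarrow> nat) set set \<Rightarrow> ('a \<Rightarrow> nat) set \<Rightarrow> ('a \<Rightarrow> nat) set \<Rightarrow> bool" where
  "std1_cover k AA N V \<longleftrightarrow> finite AA \<and> finite N \<and> \<Union>AA \<union> N \<subseteq> funs_below k \<and>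
     (\<forall>A\<in>AA. std_win {..<k} A 1) \<and> V \<subseteq> \<Union>AA \<union> N"

lemma std1_cover_potential_pos:
  assumes "std1_cover k AA N V" and "V \<noteq> {}" and "0 < k"
  shows "0 < k * card AA + card N"
  using assms unfolding std1_cover_def by (auto simp: card_gt_0_iff)

lemma std1_cover_restrict:
  assumes cover: "std1_cover k AA N V" and pivots: "\<forall>A\<in>AA. pivot A x (h A)"
  shows "\<exists>AA' N'. std1_cover k AA' N' {f\<in>V. f x \<in> Z} \<and>
    card AA' \<le> card {A\<in>AA. h A \<in> Z} \<and>
    card N' \<le> card {f\<in>N. f x \<in> Z} + card (Z \<inter> {..<k}) * card {A\<in>AA. h A \<notin> Z}"
proof (intro exI conjI)
  let ?kept = "{A\<in>AA. h A \<in> Z}" and ?dropped = "{A\<in>AA. h A \<notin> Z}"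
  let ?AA' = "(\<lambda>A. {f\<in>A. f x \<in> Z}) ` ?kept"
  let ?N' = "{f\<in>N. f x \<in> Z} \<union> (\<Union>A\<in>?dropped. {f\<in>A. f x \<in> Z})"
  have fin: "finite AA" "finite N"
    using cover unfolding std1_cover_def by auto
  have dropped: "finite {f\<in>A. f x \<in> Z} \<and> card {f\<in>A. f x \<in> Z} \<le> card (Z \<inter> {..<k})"
    if "A \<in> ?dropped" for A
  proof -
    have "\<forall>f\<in>A. f x \<in> {..<k}"
      using cover that unfolding std1_cover_def funs_below_def by auto
    then show ?thesis
      using pivot_off_fibres_card[of A x "h A" Z "{..<k}"] pivots that by auto
  qed
  show "std1_cover k ?AA' ?N' {f\<in>V. f x \<in> Z}"
    unfolding std1_cover_def
  proof (intro conjI ballI)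
    show "finite ?AA'" "finite ?N'"
      using fin dropped by auto
    show "\<Union>?AA' \<union> ?N' \<subseteq> funs_below k"
      using cover unfolding std1_cover_def by blast
    show "std_win {..<k} B 1" if "B \<in> ?AA'" for B
      using that cover unfolding std1_cover_def by (auto elim: std_win_antimono)
    show "{f\<in>V. f x \<in> Z} \<subseteq> \<Union>?AA' \<union> ?N'"
      using cover unfolding std1_cover_def by blast
  qed
  show "card ?AA' \<le> card ?kept"
    using fin by (intro card_image_le) simp
  have "card ?N' \<le> card {f\<in>N. f x \<in> Z} + card (\<Union>A\<in>?dropped. {f\<in>A. f x \<in> Z})"
    by (rule card_Un_le)
  also have "card (\<Union>A\<in>?dropped. {f\<in>A. f x \<in> Z}) \<le> (\<Sum>A\<in>?dropped. card {f\<in>A. f x \<in> Z})"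
    using fin by (intro card_UN_le) simp
  also have "\<dots> \<le> of_nat (card ?dropped) * card (Z \<inter> {..<k})"
    using dropped by (intro sum_bounded_above) auto
  finally show "card ?N' \<le> card {f\<in>N. f x \<in> Z} + card (Z \<inter> {..<k}) * card ?dropped"
    by (simp add: mult.commute)
qed

definition cover_state :: "nat \<Rightarrow> ('a \<Rightarrow> nat) set \<Rightarrow> nat \<Rightarrow> bool" where
  "cover_state k V m \<longleftrightarrow>
     (\<exists>AA N. std1_cover k AA N V \<and> mistake_budget k (card AA) (k * card AA + card N) m)"

lemma cover_state_agree:
  assumes cover: "std1_cover k AA N V" and pivots: "\<forall>A\<in>AA. pivot A x (h A)"
    and budget: "mistake_budget k (card AA) (k * card AA + card N) m"
  shows "cover_state k {f\<in>V. f x = y} m"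
proof -
  obtain AA' N' where cover': "std1_cover k AA' N' {f\<in>V. f x \<in> {y}}"
    and AA': "card AA' \<le> card {A\<in>AA. h A \<in> {y}}"
    and N': "card N' \<le> card {f\<in>N. f x \<in> {y}} + card ({y} \<inter> {..<k}) * card {A\<in>AA. h A \<notin> {y}}"
    using std1_cover_restrict[OF cover pivots] by blast
  have fin: "finite AA" "finite N"
    using cover unfolding std1_cover_def by auto
  have split: "card AA = card {A\<in>AA. h A \<in> {y}} + card {A\<in>AA. h A \<notin> {y}}"
    using fin(1) by (rule card_filter_split)
  have "card {f\<in>N. f x \<in> {y}} \<le> card N"
    using fin by (intro card_mono) auto
  moreover have "card ({y} \<inter> {..<k}) * card {A\<in>AA. h A \<notin> {y}} \<le> k * card {A\<in>AA. h A \<notin> {y}}"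
    by (intro mult_le_mono1 card_Int_lessThan_le)
  moreover have "k * card AA' \<le> k * card {A\<in>AA. h A \<in> {y}}"
    using AA' by simp
  moreover have "k * card AA = k * card {A\<in>AA. h A \<in> {y}} + k * card {A\<in>AA. h A \<notin> {y}}"
    using split by (simp add: distrib_left)
  ultimately have "k * card AA' + card N' \<le> k * card AA + card N"
    using N' by linarith
  moreover have "card AA' \<le> card AA"
    using AA' split by simp
  ultimately show ?thesis
    unfolding cover_state_def using cover' budget by (auto intro: mistake_budget_mono)
qed

lemma cover_state_disagree:
  assumes cover: "std1_cover k AA N V" and pivots: "\<forall>A\<in>AA. pivot A x (h A)"
    and budget: "mistake_budget k (card AA) (k * card AA + card N) m"
    and "0 < k" and "y < k" and nonempty: "{f\<in>V. f x \<noteq> y} \<noteq> {}"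
    and heavy: "k * card AA + card N \<le> k * (k * card {A\<in>AA. h A = y} + card {f\<in>N. f x = y})"
  shows "0 < m \<and> cover_state k {f\<in>V. f x \<noteq> y} (m - 1)"
proof -
  define a where "a = card {A\<in>AA. h A = y}"
  define b where "b = card {A\<in>AA. h A \<noteq> y}"
  define c where "c = card {f\<in>N. f x = y}"
  define d where "d = card {f\<in>N. f x \<noteq> y}"
  obtain AA' N' where cover': "std1_cover k AA' N' {f\<in>V. f x \<in> - {y}}"
    and AA': "card AA' \<le> card {A\<in>AA. h A \<in> - {y}}"
    and N': "card N' \<le>
      card {f\<in>N. f x \<in> - {y}} + card (- {y} \<inter> {..<k}) * card {A\<in>AA. h A \<notin> - {y}}"
    using std1_cover_restrict[OF cover pivots] by blast
  have "- {y} \<inter> {..<k} = {..<k} - {y}"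
    by blast
  then have "card (- {y} \<inter> {..<k}) = k - 1"
    using \<open>y < k\<close> by simp
  then have "card AA' \<le> b" and N'_le: "card N' \<le> d + (k - 1) * a"
    using AA' N' unfolding a_def b_def d_def by simp_all
  moreover have "k * card AA' \<le> k * b"
    using \<open>card AA' \<le> b\<close> by simp
  ultimately have P'_le: "k * card AA' + card N' \<le> k * b + d + (k - 1) * a"
    by linarith
  have cover'': "std1_cover k AA' N' {f\<in>V. f x \<noteq> y}"
    using cover' by simp
  have "finite AA" "finite N"
    using cover unfolding std1_cover_def by auto
  then have "card AA = a + b" and "card N = c + d"
    unfolding a_def b_def c_def d_def by (simp_all add: card_filter_split)
  then have "0 < m \<and> mistake_budget k (card AA') (k * card AA' + card N') (m - 1)"
    using mistake_budget_disagree[OF _ \<open>0 < k\<close> _ \<open>card AA' \<le> b\<close> _ P'_le]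
      budget heavy std1_cover_potential_pos[OF cover'' nonempty \<open>0 < k\<close>]
    unfolding a_def[symmetric] c_def[symmetric] by simp
  then show ?thesis
    unfolding cover_state_def using cover'' by blast
qed

lemma cover_state_step:
  assumes "0 < k" and "cover_state k V m"
  shows "\<exists>y<k. cover_state k {f\<in>V. f x = y} m \<and>
    ({f\<in>V. f x \<noteq> y} \<noteq> {} \<longrightarrow> 0 < m \<and> cover_state k {f\<in>V. f x \<noteq> y} (m - 1))"
proof -
  obtain AA N where cover: "std1_cover k AA N V"
    and budget: "mistake_budget k (card AA) (k * card AA + card N) m"
    using assms(2) unfolding cover_state_def by blast
  have fin: "finite AA" "finite N"
    using cover unfolding std1_cover_def by auto
  have "\<forall>A\<in>AA. \<exists>h. h < k \<and> pivot A x h"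
    using cover std_win_one_pivot unfolding std1_cover_def by fastforce
  then obtain h where pivots: "\<forall>A\<in>AA. pivot A x (h A)" and h_less: "\<forall>A\<in>AA. h A < k"
    by metis
  define w where "w v = k * card {A\<in>AA. h A = v} + card {f\<in>N. f x = v}" for v
  have "card AA = (\<Sum>v<k. card {A\<in>AA. h A = v})"
    using fin h_less by (intro card_eq_sum_card_fibres) auto
  moreover have "card N = (\<Sum>v<k. card {f\<in>N. f x = v})"
    using fin cover by (intro card_eq_sum_card_fibres) (auto simp: std1_cover_def funs_below_def)
  ultimately have "k * card AA + card N = (\<Sum>v<k. w v)"
    unfolding w_def by (simp add: sum.distrib sum_distrib_left)
  moreover obtain y where "y < k" and "(\<Sum>v<k. w v) \<le> k * w y"
    using ex_sum_le_card_mult[of "{..<k}" w] \<open>0 < k\<close> by auto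
  ultimately have heavy: "k * card AA + card N \<le> k * w y"
    \<comment> \<open>so a NO answer eliminating no class removes at least 1/k of the potential\<close>
    by simp
  show ?thesis
    using cover_state_agree[OF cover pivots budget] \<open>y < k\<close>
      cover_state_disagree[OF cover pivots budget \<open>0 < k\<close> \<open>y < k\<close> _ heavy[unfolded w_def]]
    by blast
qed

text \<open>The first mistake will leave at most k - 1 classes, of potential k each.\<close>
definition std2_state :: "nat \<Rightarrow> ('a \<Rightarrow> nat) set \<Rightarrow> nat \<Rightarrow> bool" where
  "std2_state k V m \<longleftrightarrow> V \<subseteq> funs_below k \<and> std_win {..<k} V 2 \<and> 0 < m \<and>
     mistake_budget k (k - 1) (k * (k - 1)) (m - 1)"

lemma std2_state_init:
  assumes "V \<subseteq> funs_below k" and "std_win {..<k} V 2" and "0 < k"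
    and "k * (k - 1) ^ J \<le> k ^ J"
  shows "std2_state k V (J + 2 * k)"
proof -
  have "k * (k - 1) * (k - 1) ^ J = (k - 1) * (k * (k - 1) ^ J)"
    by simp
  also have "\<dots> \<le> k * k ^ J"
    using assms(4) by (intro mult_le_mono) simp_all
  also have "\<dots> = (k - 1 + 1) * k ^ J"
    using \<open>0 < k\<close> by simp
  finally have "mistake_budget k (k - 1) (k * (k - 1)) (J + 2 * k - 1)"
    unfolding mistake_budget_def using \<open>0 < k\<close>
    by (intro exI[of _ J] exI[of _ "k - 1"]) auto
  then show ?thesis
    unfolding std2_state_def using assms(1-3) by simp
qed

lemma std2_state_step:
  assumes "0 < k" and "std2_state k V m"
  shows "\<exists>y<k. ({f\<in>V. f x = y} \<noteq> {} \<longrightarrow> std2_state k {f\<in>V. f x = y} m) \<and>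
    ({f\<in>V. f x \<noteq> y} \<noteq> {} \<longrightarrow> 0 < m \<and> cover_state k {f\<in>V. f x \<noteq> y} (m - 1))"
proof -
  have V: "V \<subseteq> funs_below k" and std2: "std_win {..<k} V 2" and "0 < m"
    and budget: "mistake_budget k (k - 1) (k * (k - 1)) (m - 1)"
    using assms(2) unfolding std2_state_def by auto
  obtain z where "z < k" and z: "\<forall>v. {f\<in>V. f x = v} \<noteq> {} \<longrightarrow>
      (if v = z then std_win {..<k} {f\<in>V. f x = v} 2
       else 0 < (2::nat) \<and> std_win {..<k} {f\<in>V. f x = v} (2 - 1))"
    using std_win_unfold[OF std2] by blast
  have agree: "std2_state k {f\<in>V. f x = z} m" if "{f\<in>V. f x = z} \<noteq> {}"
    using z[rule_format, OF that] V \<open>0 < m\<close> budget unfolding std2_state_def by auto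
  define AA where "AA = (\<lambda>v. {f\<in>V. f x = v}) ` ({..<k} - {z})"
  have "std_win {..<k} A 1" if "A \<in> AA" for A
  proof (cases "A = {}")
    case True
    then show ?thesis
      using std_win_empty[of "{..<k}"] \<open>0 < k\<close> by auto
  next
    case False
    then show ?thesis
      using z that unfolding AA_def by auto
  qed
  moreover have "{f\<in>V. f x \<noteq> z} \<subseteq> \<Union>AA"
    using V unfolding AA_def funs_below_def by auto
  ultimately have "std1_cover k AA {} {f\<in>V. f x \<noteq> z}"
    using V unfolding std1_cover_def AA_def by auto
  moreover have "card AA \<le> k - 1"
    using card_image_le[of "{..<k} - {z}" "\<lambda>v. {f\<in>V. f x = v}"] \<open>z < k\<close>
    unfolding AA_def by simp
  then have "mistake_budget k (card AA) (k * card AA + card {}) (m - 1)"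
    by (intro mistake_budget_mono[OF budget]) auto
  ultimately have "cover_state k {f\<in>V. f x \<noteq> z} (m - 1)"
    unfolding cover_state_def by blast
  then show ?thesis
    using \<open>z < k\<close> agree \<open>0 < m\<close> by blast
qed

lemma bs_win_if_std2_state:
  assumes "0 < k" and "std2_state k V m"
  shows "bs_win {..<k} V m"
proof -
  have "std2_state k V m \<or> cover_state k V m"
    using assms(2) ..
  then show ?thesis
  proof (coinduction arbitrary: V m)
    case (bs_win V m)
    have "\<exists>y\<in>{..<k}.
        ({f\<in>V. f x = y} \<noteq> {} \<longrightarrow>
          std2_state k {f\<in>V. f x = y} m \<or> cover_state k {f\<in>V. f x = y} m) \<and>
        ({f\<in>V. f x \<noteq> y} \<noteq> {} \<longrightarrow> 0 < m \<and>
          (std2_state k {f\<in>V. f x \<noteq> y} (m - 1) \<or> cover_state k {f\<in>V. f x \<noteq> y} (m - 1)))" for x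
      using bs_win std2_state_step[OF \<open>0 < k\<close>, of V m x] cover_state_step[OF \<open>0 < k\<close>, of V m x]
      by auto
    then show ?case
      by meson
  qed
qed

lemma mult_pred_power_le_power:
  assumes "0 < k" and "real k * ln (real k) \<le> real J"
  shows "k * (k - 1) ^ J \<le> k ^ J"
proof (cases "k = 1")
  case True
  then show ?thesis by (simp add: power_0_left)
next
  case False
  define a where "a = real k"
  have "2 \<le> a"
    using assms(1) False unfolding a_def by linarith
  have "(1 - 1 / a) ^ J \<le> exp (- 1 / a) ^ J"
    using exp_ge_add_one_self[of "- 1 / a"] \<open>2 \<le> a\<close> by (intro power_mono) auto
  also have "\<dots> = exp (- (real J / a))"
    by (simp flip: exp_of_nat_mult)
  also have "\<dots> \<le> exp (- ln a)"
    using assms(2) \<open>2 \<le> a\<close> unfolding a_def[symmetric] by (simp add: field_simps)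
  also have "\<dots> = 1 / a"
    using \<open>2 \<le> a\<close> by (simp add: exp_minus')
  finally have "a * (a ^ J * (1 - 1 / a) ^ J) \<le> a ^ J"
    using \<open>2 \<le> a\<close> by (simp add: field_simps)
  moreover have "a ^ J * (1 - 1 / a) ^ J = (a - 1) ^ J"
    using \<open>2 \<le> a\<close> by (simp flip: power_mult_distrib add: field_simps)
  ultimately have "real k * (real k - 1) ^ J \<le> real k ^ J"
    unfolding a_def by simp
  moreover have "real (k * (k - 1) ^ J) = real k * (real k - 1) ^ J"
    using assms(1) by (simp add: of_nat_diff)
  ultimately show ?thesis
    by (metis of_nat_le_iff of_nat_power)
qed

theorem mainTheorem3:
  fixes k :: nat and F :: "('x \<Rightarrow> nat) set"
  assumes "0 < k"
    and "\<forall>f\<in>F. \<forall>x. f x < k"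
    and "opt_std {..<k} F = 2"
  shows "opt_bs {..<k} F \<le> enat (nat \<lceil>real k * ln (real k)\<rceil> + 2 * k)"
proof -
  define J where "J = nat \<lceil>real k * ln (real k)\<rceil>"
  have "F \<subseteq> funs_below k"
    using assms(2) unfolding funs_below_def by blast
  moreover have "std_win {..<k} F 2"
    using assms(3) by (intro std_win_of_opt_std_eq) (simp add: numeral_eq_enat)
  moreover have "k * (k - 1) ^ J \<le> k ^ J"
    using assms(1) real_nat_ceiling_ge unfolding J_def by (rule mult_pred_power_le_power)
  ultimately have "std2_state k F (J + 2 * k)"
    using assms(1) by (intro std2_state_init)
  then have "bs_win {..<k} F (J + 2 * k)"
    by (rule bs_win_if_std2_state[OF assms(1)])
  then show ?thesis
    unfolding opt_bs_def J_def[symmetric] by (intro INF_lower) simp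
qed

end
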